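(* Let $V\colon\mathbb{R}^3\to S^2$ define a line fibration of $\mathbb{R}^3$. If the differential $\mathrm{d}_{p_0}V$ has rank $2$ at some point $p_0\in\mathbb{R}^3$, then the line fibration contains no line $\ell\neq\ell_{p_0}$ that is parallel to $\ell_{p_0}$. In particular, if $\mathrm{d}_pV$ has rank $2$ at every point $p$ (the fibration is non-degenerate), then no two distinct lines of the fibration are parallel (the fibration is skew). *)

theory Defs
  imports "HOL-Analysis.Analysis"
begin

definition pd :: "3 \<Rightarrow> (real^3 \<Rightarrow> real) \<Rightarrow> real^3 \<Rightarrow> real" where
  "pd i f x = deriv (\<lambda>t. f (x + t *\<^sub>R axis i 1)) 0"

definition smooth_scalar :: "(real^3 \<Rightarrow> real) \<Rightarrow> bool" where
  "smooth_scalar f \<longleftrightarrow>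
     (\<forall>is. continuous_on UNIV (foldr pd is f) \<and>
           (\<forall>i x. (\<lambda>t. foldr pd is f (x + t *\<^sub>R axis i 1)) differentiable (at 0)))"

definition smooth_map :: "(real^3 \<Rightarrow> real^3) \<Rightarrow> bool" where
  "smooth_map V \<longleftrightarrow> (\<forall>k. smooth_scalar (\<lambda>x. V x $ k))"

definition fline :: "(real^3 \<Rightarrow> real^3) \<Rightarrow> real^3 \<Rightarrow> (real^3) set" where
  "fline V p = {p + t *\<^sub>R V p | t. True}"

text \<open>V : R^3 -> S^2 (smooth) defines a line fibration: the lines l_p partition R^3,
  i.e. whenever q lies on l_p, the line l_q is l_p.\<close>
definition line_fibration :: "(real^3 \<Rightarrow> real^3) \<Rightarrow> bool" where
  "line_fibration V \<longleftrightarrow> smooth_map V \<and> (\<forall>p. norm (V p) = 1) \<and>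
     (\<forall>p q. q \<in> fline V p \<longrightarrow> fline V q = fline V p)"

definition parallel_dirs :: "real^3 \<Rightarrow> real^3 \<Rightarrow> bool" where
  "parallel_dirs u v \<longleftrightarrow> u = v \<or> u = - v"

end

theory Submission
  imports Defs
begin

text \<open>Let u = V p0 and let P be the orthogonal projection onto the plane orthogonal to u.
  Since V is a unit field, its differential at p0 takes values in that plane, so rank 2 means
  that it maps onto it; let R be a right inverse. Follow the lines through the points p0 + s R z,
  z in the unit disc of the plane, for time \<tau>/s: their P-projections are \<tau> times a map that is
  uniformly close to the identity once s is small, so by Brouwer's fixed point theorem they cover
  a disc of radius comparable to \<tau>. Hence lines through points arbitrarily close to p0 meet
  every line parallel to the line of p0. A parallel line of q \<noteq> the line of p0 lies at distance
  |P (q - p0)| > 0 from it; a line through x with |x - p0| smaller than that distance which meets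
  the line of q coincides with it, forcing P (x - p0) = P (q - p0), which is impossible.\<close>

definition perp_proj :: "'a::real_inner \<Rightarrow> 'a \<Rightarrow> 'a" where
  "perp_proj u v = v - (u \<bullet> v) *\<^sub>R u"

lemma linear_perp_proj: "linear (perp_proj u)"
  unfolding perp_proj_def by (auto intro!: linearI simp: inner_add_right algebra_simps)

lemma perp_proj_uminus [simp]: "perp_proj (- u) = perp_proj u"
  by (auto simp: perp_proj_def)

lemma perp_proj_eq_0_iff: "perp_proj u v = 0 \<longleftrightarrow> v = (u \<bullet> v) *\<^sub>R u"
  by (simp add: perp_proj_def)

lemma perp_proj_orthogonal: "u \<bullet> v = 0 \<Longrightarrow> perp_proj u v = v"
  by (simp add: perp_proj_def)

lemma perp_proj_self: "norm u = 1 \<Longrightarrow> perp_proj u u = 0"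
  by (simp add: perp_proj_def norm_eq_1)

lemma inner_perp_proj: "norm u = 1 \<Longrightarrow> u \<bullet> perp_proj u v = 0"
  by (simp add: perp_proj_def inner_diff_right norm_eq_1)

lemma norm_perp_proj_le:
  assumes "norm u = 1"
  shows "norm (perp_proj u v) \<le> norm v"
proof -
  have "norm (perp_proj u v) ^ 2 = norm v ^ 2 - (u \<bullet> v) ^ 2"
    using assms unfolding perp_proj_def power2_norm_eq_inner norm_eq_1
    by (simp add: inner_diff_left inner_diff_right inner_commute power2_eq_square algebra_simps)
  then have "norm (perp_proj u v) ^ 2 \<le> norm v ^ 2"
    by simp
  then show ?thesis
    by (simp add: power_mono_iff)
qed

lemma brouwer_surjective_subspace_ball:
  fixes g :: "'a::euclidean_space \<Rightarrow> 'a"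
  assumes L: "subspace L" and contg: "continuous_on (L \<inter> cball 0 1) g"
    and gL: "g ` (L \<inter> cball 0 1) \<subseteq> L" and "y \<in> L"
    and close: "\<And>z. z \<in> L \<inter> cball 0 1 \<Longrightarrow> norm (g z - z) \<le> 1 - norm y"
  shows "\<exists>z \<in> L \<inter> cball 0 1. g z = y"
proof (rule brouwer_surjective[where S = "{y}"])
  show "compact (L \<inter> cball 0 1)"
    by (simp add: L closed_subspace closed_Int_compact)
  show "convex (L \<inter> cball 0 1)"
    by (simp add: L convex_Int subspace_imp_convex)
  show "L \<inter> cball 0 1 \<noteq> {}"
    using L subspace_0 by fastforce
  fix x z assume "x \<in> {y}" "z \<in> L \<inter> cball 0 1"
  moreover have "norm (x + (z - g z)) \<le> norm x + norm (g z - z)"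
    by (metis norm_minus_commute norm_triangle_ineq)
  ultimately show "x + (z - g z) \<in> L \<inter> cball 0 1"
    using close gL L \<open>y \<in> L\<close> by (force intro: subspace_add subspace_diff)
qed (use assms in auto)

lemma unit_field_derivative_orthogonal:
  fixes V :: "'a::real_normed_vector \<Rightarrow> 'b::real_inner"
  assumes unit: "\<And>x. norm (V x) = 1" and dV: "(V has_derivative D) (at p)"
  shows "V p \<bullet> D h = 0"
proof -
  have "((\<lambda>x. V x \<bullet> V x) has_derivative (\<lambda>h. V p \<bullet> D h + D h \<bullet> V p)) (at p)"
    using dV dV by (rule has_derivative_inner)
  moreover have "((\<lambda>x. V x \<bullet> V x) has_derivative (\<lambda>h. 0)) (at p)"
    using unit by (simp add: norm_eq_1)
  ultimately have "(\<lambda>h. V p \<bullet> D h + D h \<bullet> V p) = (\<lambda>h. 0)"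
    by (rule has_derivative_unique)
  then show ?thesis
    by (metis inner_commute mult_2 mult_eq_0_iff zero_neq_numeral)
qed

lemma range_derivative_unit_field:
  fixes V :: "'a::euclidean_space \<Rightarrow> 'b::euclidean_space"
  assumes unit: "\<And>x. norm (V x) = 1" and dV: "(V has_derivative D) (at p)"
    and rank: "dim (range D) = DIM('b) - 1"
  shows "range D = {v. V p \<bullet> v = 0}"
proof (rule subspace_dim_equal)
  have "linear D"
    using dV has_derivative_linear by blast
  then show "subspace (range D)"
    by (simp add: linear_subspace_image subspace_UNIV)
  show "range D \<subseteq> {v. V p \<bullet> v = 0}"
    using unit_field_derivative_orthogonal[OF unit dV] by auto
  have "V p \<noteq> 0"
    using unit[of p] by auto
  then show "dim {v. V p \<bullet> v = 0} \<le> dim (range D)"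
    by (simp add: dim_hyperplane rank)
qed (rule subspace_hyperplane)

lemma rescaled_projected_field_near_id:
  fixes V :: "'a::euclidean_space \<Rightarrow> 'a"
  assumes unit: "\<And>x. norm (V x) = 1" and dV: "(V has_derivative D) (at p0)"
    and rank: "dim (range D) = DIM('a) - 1"
  obtains R K \<delta> where "linear R" "K > 0" "\<And>z. norm z \<le> 1 \<Longrightarrow> norm (R z) \<le> K" "\<delta> > 0"
    and "\<And>s z. \<lbrakk>0 < s; s * K < \<delta>; V p0 \<bullet> z = 0; norm z \<le> 1\<rbrakk> \<Longrightarrow>
           norm ((1 / s) *\<^sub>R perp_proj (V p0) (V (p0 + s *\<^sub>R R z)) - z) \<le> 1 / 4"
proof -
  define u where "u = V p0"
  define P where "P = perp_proj u"
  have linD: "linear D"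
    using dV has_derivative_linear by blast
  have rangeD: "range D = {v. u \<bullet> v = 0}"
    unfolding u_def by (rule range_derivative_unit_field[OF unit dV rank])
  obtain R where linR: "linear R" and RD: "\<And>z. u \<bullet> z = 0 \<Longrightarrow> D (R z) = z"
    using linear_exists_right_inverse_on[OF linD subspace_UNIV] rangeD by auto
  obtain K where "K > 0" and bound: "\<And>z. norm (R z) \<le> K * norm z"
    using linear_bounded_pos[OF linR] by auto
  have R_le: "norm (R z) \<le> K" if "norm z \<le> 1" for z
    using bound[of z] mult_left_le[OF that, of K] \<open>K > 0\<close> by linarith
  have "1 / (4 * K) > 0"
    using \<open>K > 0\<close> by simp
  then obtain \<delta> where "\<delta> > 0" and approx:
      "\<And>x. norm (x - p0) < \<delta> \<Longrightarrow> norm (V x - u - D (x - p0)) \<le> 1 / (4 * K) * norm (x - p0)"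
    using dV unfolding has_derivative_at_alt u_def by blast
  show thesis
  proof (rule that[OF linR \<open>K > 0\<close> R_le \<open>\<delta> > 0\<close>])
    fix s z assume s: "0 < s" "s * K < \<delta>" and z: "V p0 \<bullet> z = 0" "norm z \<le> 1"
    define h where "h = s *\<^sub>R R z"
    define err where "err = V (p0 + h) - u - D h"
    have h: "norm h \<le> s * K"
      using R_le[OF z(2)] s(1) by (simp add: h_def mult_left_mono)
    have "V (p0 + h) = u + D h + err"
      by (simp add: err_def)
    then have "P (V (p0 + h)) = P u + P (D h) + P err"
      by (simp only: linear_add[OF linear_perp_proj] P_def)
    moreover have "P (D h) = D h"
      using unit_field_derivative_orthogonal[OF unit dV] by (simp add: P_def u_def perp_proj_orthogonal)
    moreover have "D h = s *\<^sub>R z"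
      using RD z linear_scale[OF linD] by (simp add: h_def u_def)
    ultimately have "(1 / s) *\<^sub>R P (V (p0 + h)) - z = (1 / s) *\<^sub>R P err"
      using unit s(1) by (simp add: P_def u_def perp_proj_self scaleR_add_right)
    moreover have "norm err \<le> s / 4"
    proof -
      have "norm err \<le> 1 / (4 * K) * norm h"
        using approx[of "p0 + h"] h s(2) by (simp add: err_def)
      also have "\<dots> \<le> 1 / (4 * K) * (s * K)"
        using h \<open>K > 0\<close> by (simp add: divide_le_eq mult.commute)
      finally show ?thesis
        using \<open>K > 0\<close> by simp
    qed
    moreover have "norm (P err) \<le> norm err"
      using unit by (simp add: P_def u_def norm_perp_proj_le)
    ultimately show "norm ((1 / s) *\<^sub>R perp_proj (V p0) (V (p0 + s *\<^sub>R R z)) - z) \<le> 1 / 4"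
      using s(1) by (simp add: P_def u_def h_def divide_le_eq)
  qed
qed

lemma lines_near_point_cover_normal_plane:
  fixes V :: "'a::euclidean_space \<Rightarrow> 'a"
  assumes unit: "\<And>x. norm (V x) = 1" and contV: "continuous_on UNIV V"
    and dV: "(V has_derivative D) (at p0)" and rank: "dim (range D) = DIM('a) - 1"
    and y: "V p0 \<bullet> y = 0" and "\<epsilon> > 0"
  shows "\<exists>x t. norm (x - p0) < \<epsilon> \<and> perp_proj (V p0) (x + t *\<^sub>R V x - p0) = y"
proof -
  obtain R K \<delta> where linR: "linear R" and K: "K > 0" "\<And>z. norm z \<le> 1 \<Longrightarrow> norm (R z) \<le> K"
    and "\<delta> > 0" and near_id: "\<And>s z. \<lbrakk>0 < s; s * K < \<delta>; V p0 \<bullet> z = 0; norm z \<le> 1\<rbrakk> \<Longrightarrow>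
           norm ((1 / s) *\<^sub>R perp_proj (V p0) (V (p0 + s *\<^sub>R R z)) - z) \<le> 1 / 4"
    by (rule rescaled_projected_field_near_id[OF unit dV rank]) auto
  define L where "L = {v. V p0 \<bullet> v = 0}"
  define P where "P = perp_proj (V p0)"
  have linP: "linear P"
    by (simp add: P_def linear_perp_proj)
  define s where "s = min \<delta> \<epsilon> / (2 * K)"
  have s: "s > 0" "s * K < \<delta>" "s * K < \<epsilon>"
    using K(1) \<open>\<delta> > 0\<close> \<open>\<epsilon> > 0\<close> by (auto simp: s_def)
  define \<tau> where "\<tau> = 4 * (norm y + s * K) + 1"
  have "norm y + s * K \<ge> 0"
    using s K by simp
  then have \<tau>: "\<tau> > 0" "norm y / \<tau> + s * K / \<tau> \<le> 1 / 4"
    by (auto simp: \<tau>_def field_simps simp flip: add_divide_distrib)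
  define X where "X z = p0 + s *\<^sub>R R z" for z
  define g where "g z = (1 / \<tau>) *\<^sub>R P (X z - p0) + (1 / s) *\<^sub>R P (V (X z))" for z
  have near: "norm (X z - p0) \<le> s * K" if "z \<in> cball 0 1" for z
    using K(2)[of z] that s(1) by (simp add: X_def mult_left_mono)
  have "\<exists>z \<in> L \<inter> cball 0 1. g z = (1 / \<tau>) *\<^sub>R y"
  proof (rule brouwer_surjective_subspace_ball)
    show "subspace L"
      by (simp add: L_def subspace_hyperplane)
    have contR: "continuous_on UNIV R"
      using linR by (simp add: linear_continuous_on linear_linear)
    have "continuous_on UNIV (\<lambda>z. V (X z))"
      unfolding X_def by (rule continuous_on_compose2[OF contV]) (auto intro!: continuous_intros contR)
    then have "continuous_on UNIV g"
      unfolding g_def P_def perp_proj_def X_def by (intro continuous_intros contR)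
    then show "continuous_on (L \<inter> cball 0 1) g"
      by (rule continuous_on_subset) simp
    show "g ` (L \<inter> cball 0 1) \<subseteq> L" "(1 / \<tau>) *\<^sub>R y \<in> L"
      using unit y by (auto simp: g_def L_def P_def inner_perp_proj inner_add_right)
  next
    fix z assume z: "z \<in> L \<inter> cball 0 1"
    have "g z - z = (1 / \<tau>) *\<^sub>R P (X z - p0) + ((1 / s) *\<^sub>R P (V (X z)) - z)"
      by (simp add: g_def)
    then have "norm (g z - z) \<le> norm ((1 / \<tau>) *\<^sub>R P (X z - p0)) + norm ((1 / s) *\<^sub>R P (V (X z)) - z)"
      by (simp only: norm_triangle_ineq)
    moreover have "norm ((1 / \<tau>) *\<^sub>R P (X z - p0)) \<le> norm (X z - p0) / \<tau>"
      using \<tau>(1) norm_perp_proj_le[of "V p0" "X z - p0"] unit by (simp add: P_def divide_right_mono)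
    moreover have "norm ((1 / s) *\<^sub>R P (V (X z)) - z) \<le> 1 / 4"
      using near_id[OF s(1,2), of z] z by (simp add: L_def P_def X_def)
    ultimately have "norm (g z - z) \<le> norm (X z - p0) / \<tau> + 1 / 4"
      by linarith
    also have "\<dots> \<le> 1 - norm ((1 / \<tau>) *\<^sub>R y)"
    proof -
      have "norm (X z - p0) / \<tau> \<le> s * K / \<tau>"
        using near z \<tau>(1) by (simp add: divide_right_mono)
      moreover have "norm ((1 / \<tau>) *\<^sub>R y) = norm y / \<tau>"
        using \<tau>(1) by simp
      ultimately show ?thesis
        using \<tau>(2) by linarith
    qed
    finally show "norm (g z - z) \<le> 1 - norm ((1 / \<tau>) *\<^sub>R y)" .
  qed
  then obtain z where z: "z \<in> cball 0 1" and "g z = (1 / \<tau>) *\<^sub>R y"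
    by auto
  moreover have "P (X z + (\<tau> / s) *\<^sub>R V (X z) - p0) = \<tau> *\<^sub>R g z"
    using \<tau>(1) by (simp add: g_def linear_add[OF linP] linear_diff[OF linP] linear_scale[OF linP]
        algebra_simps)
  ultimately have "P (X z + (\<tau> / s) *\<^sub>R V (X z) - p0) = y"
    using \<tau>(1) by simp
  moreover have "norm (X z - p0) < \<epsilon>"
    using near[OF z] s by simp
  ultimately show ?thesis
    unfolding P_def by blast
qed

lemma line_fibration_continuous:
  assumes "line_fibration V"
  shows "continuous_on UNIV V"
proof -
  have "continuous_on UNIV (\<lambda>x. V x $ k)" for k
    using assms unfolding line_fibration_def smooth_map_def smooth_scalar_def
    by (metis foldr_Nil id_apply)
  then show ?thesis
    using continuous_on_vec_lambda[of UNIV "\<lambda>k x. V x $ k"] by simp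
qed

lemma mem_fline_iff:
  assumes "norm (V p) = 1"
  shows "q \<in> fline V p \<longleftrightarrow> perp_proj (V p) (q - p) = 0"
proof
  assume "q \<in> fline V p"
  then obtain t where "q = p + t *\<^sub>R V p"
    unfolding fline_def by blast
  then show "perp_proj (V p) (q - p) = 0"
    using assms by (simp add: linear_scale[OF linear_perp_proj] perp_proj_self)
next
  assume "perp_proj (V p) (q - p) = 0"
  then have "q = p + (V p \<bullet> (q - p)) *\<^sub>R V p"
    by (metis perp_proj_eq_0_iff add.commute diff_add_cancel)
  then show "q \<in> fline V p"
    unfolding fline_def by blast
qed

lemma perp_proj_parallel_dirs: "parallel_dirs v u \<Longrightarrow> perp_proj v = perp_proj u"
  by (auto simp: parallel_dirs_def)

lemma line_fibration_parallel_line_eq: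
  fixes V :: "real^3 \<Rightarrow> real^3"
  assumes fib: "line_fibration V" and dV: "(V has_derivative D) (at p0)"
    and rank: "dim (range D) = 2" and par: "parallel_dirs (V q) (V p0)"
  shows "fline V q = fline V p0"
proof (rule ccontr)
  assume ne: "fline V q \<noteq> fline V p0"
  have unit: "\<And>x. norm (V x) = 1"
    and fl: "\<And>p q. q \<in> fline V p \<Longrightarrow> fline V q = fline V p"
    using fib unfolding line_fibration_def by auto
  define P where "P = perp_proj (V p0)"
  have linP: "linear P"
    by (simp add: P_def linear_perp_proj)
  have on_line_q: "w \<in> fline V q \<longleftrightarrow> P (w - q) = 0" for w
    using mem_fline_iff[of V q w] unit perp_proj_parallel_dirs[OF par] by (simp add: P_def)
  define y where "y = P (q - p0)"
  have "y \<noteq> 0"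
  proof
    assume "y = 0"
    then have "q \<in> fline V p0"
      using mem_fline_iff[of V p0 q] unit by (simp add: y_def P_def)
    then show False
      using fl ne by blast
  qed
  moreover have "V p0 \<bullet> y = 0"
    using unit by (simp add: y_def P_def inner_perp_proj)
  moreover have "dim (range D) = DIM(real^3) - 1"
    using rank by simp
  ultimately obtain x t where x: "norm (x - p0) < norm y" and xt: "P (x + t *\<^sub>R V x - p0) = y"
    using lines_near_point_cover_normal_plane[OF unit line_fibration_continuous[OF fib] dV]
    unfolding P_def by (metis zero_less_norm_iff)
  have "x + t *\<^sub>R V x - q = (x + t *\<^sub>R V x - p0) - (q - p0)"
    by simp
  then have "x + t *\<^sub>R V x \<in> fline V q"
    using xt on_line_q by (simp add: linear_diff[OF linP] y_def)
  moreover have "x + t *\<^sub>R V x \<in> fline V x" "x \<in> fline V x"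
    unfolding fline_def by (auto intro: exI[of _ 0])
  ultimately have "x \<in> fline V q"
    using fl by metis
  then have "P (x - p0) = y"
    using on_line_q[of x] linear_add[OF linP, of "x - q" "q - p0"] by (simp add: y_def)
  then show False
    using x norm_perp_proj_le[of "V p0" "x - p0"] unit by (simp add: P_def)
qed

theorem mainTheorem2:
  fixes V :: "real^3 \<Rightarrow> real^3"
  assumes "line_fibration V"
  shows "(\<forall>p0 D. (V has_derivative D) (at p0) \<and> dim (range D) = 2 \<longrightarrow>
            \<not> (\<exists>q. fline V q \<noteq> fline V p0 \<and> parallel_dirs (V q) (V p0)))
       \<and> ((\<forall>p. \<exists>D. (V has_derivative D) (at p) \<and> dim (range D) = 2) \<longrightarrow>
            (\<forall>p q. fline V p \<noteq> fline V q \<longrightarrow> \<not> parallel_dirs (V p) (V q)))"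
  using line_fibration_parallel_line_eq[OF assms] by metis

end
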